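(* Let $d\geq 2$ and let $\vec q=(q_0,\dots,q_{d-1})$ with $q_i\in[0,1)$ and $\sum_i q_i=1$. For a realization (as described in the context) define $$T(\vec q)=p(0|\overline{A},U)-\sum_{i=0}^{d-1}\big|p(i|\overline{A},\mathbb{1})-q_i\big|.$$ (i) For every realization, when the probabilities are computed with the absoluteness-of-measurement rule, $T(\vec q)\leq\max\{q_0,\dots,q_{d-1}\}$. (ii) There exists a realization for which, when the probabilities are computed with the non-absoluteness-of-measurement rule, $T(\vec q)=1$.
   Context: A realization consists of: a complex Hilbert space $\mathcal{H}_L$; an orthonormal basis $\{|\psi_i\rangle\}_{i=0}^{d-1}$ of $\mathbb{C}^d$ (the Friend's rank-one projective measurement $\overline{A}$); orthonormal vectors $\{|f_i\rangle\}_{i=0}^{d-1}\subset\mathcal{H}_L$; a unit vector $|\psi\rangle\in\mathbb{C}^d$; and a unitary $U$ on $\mathbb{C}^d\otimes\mathcal{H}_L$. Put $|F_i\rangle=|\psi_i\rangle\otimes|f_i\rangle$ and $\alpha_i=\langle\psi_i|\psi\rangle$. For $W\in\{\mathbb{1},U\}$: Absoluteness-of-measurement rule: $p(a|\overline{A},W)=\sum_i|\alpha_i|^2|\langle F_a|W|F_i\rangle|^2$. Non-absoluteness-of-measurement rule: $p(a|\overline{A},W)=\big|\langle F_a|W\sum_i\alpha_i|F_i\rangle\big|^2$. *)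

theory Defs
  imports "HOL-Analysis.Analysis"
begin

text \<open>Complex Hilbert spaces are modelled concretely as l2(I): square-summable
  functions I \<Rightarrow> complex (every complex Hilbert space is isometrically isomorphic
  to l2(I) for some index set I).\<close>

definition l2 :: "('a \<Rightarrow> complex) set" where
  "l2 = {f. (\<lambda>x. (cmod (f x))\<^sup>2) summable_on UNIV}"

definition cinner :: "('a \<Rightarrow> complex) \<Rightarrow> ('a \<Rightarrow> complex) \<Rightarrow> complex" where
  "cinner f g = (\<Sum>\<^sub>\<infinity>x. cnj (f x) * g x)"

definition Cd :: "nat \<Rightarrow> (nat \<Rightarrow> complex) set" where
  "Cd d = {v. \<forall>k\<ge>d. v k = 0}"

text \<open>C^d \<otimes> H_L  =  l2({0..d-1} \<times> I).\<close>
definition tensor_space :: "nat \<Rightarrow> (nat \<times> 'h \<Rightarrow> complex) set" where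
  "tensor_space d = {F. F \<in> l2 \<and> (\<forall>k x. k \<ge> d \<longrightarrow> F (k, x) = 0)}"

definition tensor :: "(nat \<Rightarrow> complex) \<Rightarrow> ('h \<Rightarrow> complex) \<Rightarrow> (nat \<times> 'h \<Rightarrow> complex)" where
  "tensor v f = (\<lambda>(k, x). v k * f x)"

definition orthonormal_family :: "'v set \<Rightarrow> ('v \<Rightarrow> 'v \<Rightarrow> complex) \<Rightarrow> nat \<Rightarrow> (nat \<Rightarrow> 'v) \<Rightarrow> bool" where
  "orthonormal_family S ip d e \<longleftrightarrow>
     (\<forall>i<d. e i \<in> S) \<and> (\<forall>i<d. \<forall>j<d. ip (e i) (e j) = (if i = j then 1 else 0))"

text \<open>Unitary operator on C^d \<otimes> H_L (only its action on that space matters).\<close>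
definition unitary_on :: "nat \<Rightarrow> ((nat \<times> 'h \<Rightarrow> complex) \<Rightarrow> (nat \<times> 'h \<Rightarrow> complex)) \<Rightarrow> bool" where
  "unitary_on d U \<longleftrightarrow>
     (\<forall>F\<in>tensor_space d. U F \<in> tensor_space d) \<and>
     (\<forall>F\<in>tensor_space d. \<forall>G\<in>tensor_space d. \<forall>a b.
        U (\<lambda>z. a * F z + b * G z) = (\<lambda>z. a * U F z + b * U G z)) \<and>
     (\<forall>F\<in>tensor_space d. \<forall>G\<in>tensor_space d. cinner (U F) (U G) = cinner F G) \<and>
     tensor_space d \<subseteq> U ` tensor_space d"

text \<open>A realization with lab space l2('h): d, basis psis, records fs, state psi, unitary U.\<close>
definition realization ::
  "nat \<Rightarrow> (nat \<Rightarrow> nat \<Rightarrow> complex) \<Rightarrow> (nat \<Rightarrow> 'h \<Rightarrow> complex) \<Rightarrow> (nat \<Rightarrow> complex)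
   \<Rightarrow> ((nat \<times> 'h \<Rightarrow> complex) \<Rightarrow> (nat \<times> 'h \<Rightarrow> complex)) \<Rightarrow> bool" where
  "realization d psis fs psi U \<longleftrightarrow>
     orthonormal_family (Cd d) cinner d psis \<and>
     orthonormal_family l2 cinner d fs \<and>
     psi \<in> Cd d \<and> cinner psi psi = 1 \<and>
     unitary_on d U"

definition Fvec :: "(nat \<Rightarrow> nat \<Rightarrow> complex) \<Rightarrow> (nat \<Rightarrow> 'h \<Rightarrow> complex) \<Rightarrow> nat \<Rightarrow> (nat \<times> 'h \<Rightarrow> complex)" where
  "Fvec psis fs i = tensor (psis i) (fs i)"

definition alpha :: "(nat \<Rightarrow> nat \<Rightarrow> complex) \<Rightarrow> (nat \<Rightarrow> complex) \<Rightarrow> nat \<Rightarrow> complex" where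
  "alpha psis psi i = cinner (psis i) psi"

definition p_abs ::
  "nat \<Rightarrow> (nat \<Rightarrow> nat \<Rightarrow> complex) \<Rightarrow> (nat \<Rightarrow> 'h \<Rightarrow> complex) \<Rightarrow> (nat \<Rightarrow> complex)
   \<Rightarrow> ((nat \<times> 'h \<Rightarrow> complex) \<Rightarrow> (nat \<times> 'h \<Rightarrow> complex)) \<Rightarrow> nat \<Rightarrow> real" where
  "p_abs d psis fs psi W a =
     (\<Sum>i<d. (cmod (alpha psis psi i))\<^sup>2 * (cmod (cinner (Fvec psis fs a) (W (Fvec psis fs i))))\<^sup>2)"

definition p_nonabs ::
  "nat \<Rightarrow> (nat \<Rightarrow> nat \<Rightarrow> complex) \<Rightarrow> (nat \<Rightarrow> 'h \<Rightarrow> complex) \<Rightarrow> (nat \<Rightarrow> complex)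
   \<Rightarrow> ((nat \<times> 'h \<Rightarrow> complex) \<Rightarrow> (nat \<times> 'h \<Rightarrow> complex)) \<Rightarrow> nat \<Rightarrow> real" where
  "p_nonabs d psis fs psi W a =
     (cmod (cinner (Fvec psis fs a) (W (\<lambda>z. \<Sum>i<d. alpha psis psi i * Fvec psis fs i z))))\<^sup>2"

text \<open>T(q) for a given probability rule p (p W a = p(a | A-bar, W)).\<close>
definition T_val :: "nat \<Rightarrow> (nat \<Rightarrow> real) \<Rightarrow> ('w \<Rightarrow> nat \<Rightarrow> real) \<Rightarrow> 'w \<Rightarrow> 'w \<Rightarrow> real" where
  "T_val d q p I U = p U 0 - (\<Sum>i<d. \<bar>p I i - q i\<bar>)"

end

theory Submission
  imports Defs
begin

text \<open>With the absoluteness rule, the statistics of the identity run are the weights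
  P i = |alpha i|^2, while p(0 | U) = \<Sum>i. P i * c i with c i = |<F 0, U F i>|^2.  Since
  the U F i are orthonormal, Bessel's inequality gives \<Sum>i. c i \<le> 1, and then
  P i * c i \<le> (q i + |P i - q i|) * c i bounds T by max q.  With the non-absoluteness
  rule the coherent superposition v = \<Sum>i. sqrt (q i) * F i is kept, its identity
  statistics are exactly q, and the Householder reflection exchanging v and F 0 is a
  unitary with p(0 | U) = 1; it exists because q 0 < 1 makes v \<noteq> F 0.\<close>

lemma l2_zero: "(\<lambda>x. 0) \<in> l2"
  by (simp add: l2_def)

lemma l2_lincomb:
  assumes "f \<in> l2" "g \<in> l2"
  shows "(\<lambda>x. a * f x + b * g x) \<in> l2"
proof -
  have bound: "(cmod (a * f x + b * g x))\<^sup>2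
      \<le> 2 * (cmod a)\<^sup>2 * (cmod (f x))\<^sup>2 + 2 * (cmod b)\<^sup>2 * (cmod (g x))\<^sup>2" for x
  proof -
    have "cmod (a * f x + b * g x) \<le> cmod a * cmod (f x) + cmod b * cmod (g x)"
      by (metis norm_triangle_ineq norm_mult)
    then have "(cmod (a * f x + b * g x))\<^sup>2 \<le> (cmod a * cmod (f x) + cmod b * cmod (g x))\<^sup>2"
      by (simp add: power_mono)
    also have "\<dots> \<le> 2 * (cmod a * cmod (f x))\<^sup>2 + 2 * (cmod b * cmod (g x))\<^sup>2"
      using sum_squares_bound[of "cmod a * cmod (f x)" "cmod b * cmod (g x)"]
      by (simp add: power2_sum)
    finally show ?thesis
      by (simp add: power_mult_distrib)
  qed
  have "(\<lambda>x. 2 * (cmod a)\<^sup>2 * (cmod (f x))\<^sup>2 + 2 * (cmod b)\<^sup>2 * (cmod (g x))\<^sup>2) summable_on UNIV"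
    using assms unfolding l2_def by (intro summable_on_add summable_on_cmult_right) auto
  then show ?thesis
    unfolding l2_def mem_Collect_eq by (rule summable_on_comparison_test) (simp_all add: bound)
qed

lemma l2_sum:
  assumes "\<And>i. i \<in> S \<Longrightarrow> h i \<in> l2"
  shows "(\<lambda>x. \<Sum>i\<in>S. c i * h i x) \<in> l2"
  using assms
proof (induction S rule: infinite_finite_induct)
  case (insert j S)
  then have "(\<lambda>x. c j * h j x + 1 * (\<Sum>i\<in>S. c i * h i x)) \<in> l2"
    by (intro l2_lincomb) auto
  with insert show ?case
    by simp
qed (simp_all add: l2_zero)

lemma l2_finite_support:
  assumes "finite A" "\<And>z. z \<notin> A \<Longrightarrow> f z = 0"
  shows "f \<in> l2"
proof -
  have "(\<lambda>z. (cmod (f z))\<^sup>2) summable_on UNIV \<longleftrightarrow> (\<lambda>z. (cmod (f z))\<^sup>2) summable_on A"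
    by (rule summable_on_cong_neutral) (auto simp: assms)
  then show ?thesis
    unfolding l2_def using assms by simp
qed

lemma cinner_summable:
  assumes "f \<in> l2" "g \<in> l2"
  shows "(\<lambda>x. cnj (f x) * g x) summable_on UNIV"
proof (rule abs_summable_summable, rule abs_summable_product)
  show "(\<lambda>x. norm (cnj (f x) * cnj (f x))) summable_on UNIV"
    using assms(1) by (simp add: l2_def norm_mult power2_eq_square)
  show "(\<lambda>x. norm (g x * g x)) summable_on UNIV"
    using assms(2) by (simp add: l2_def norm_mult power2_eq_square)
qed

lemma cinner_commute: "cinner g f = cnj (cinner f g)"
  unfolding cinner_def infsum_cnj[symmetric] by (simp add: mult.commute)

lemma cinner_self_nonneg:
  assumes "f \<in> l2"
  shows "0 \<le> Re (cinner f f)"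
proof -
  have "Re (cinner f f) = (\<Sum>\<^sub>\<infinity>x. Re (cnj (f x) * f x))"
    unfolding cinner_def using infsum_Re[OF cinner_summable[OF assms assms]] by simp
  also have "\<dots> \<ge> 0"
    by (rule infsum_nonneg) simp
  finally show ?thesis .
qed

lemma cinner_lincomb_right:
  assumes "f \<in> l2" "g \<in> l2" "h \<in> l2"
  shows "cinner f (\<lambda>x. a * g x + b * h x) = a * cinner f g + b * cinner f h"
proof -
  have "cinner f (\<lambda>x. a * g x + b * h x)
      = (\<Sum>\<^sub>\<infinity>x. a * (cnj (f x) * g x) + b * (cnj (f x) * h x))"
    unfolding cinner_def by (simp add: algebra_simps)
  also have "\<dots> = a * cinner f g + b * cinner f h"
    using cinner_summable[OF assms(1,2)] cinner_summable[OF assms(1,3)]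
    by (simp add: cinner_def infsum_add summable_on_cmult_right infsum_cmult_right)
  finally show ?thesis .
qed

lemma cinner_lincomb_left:
  assumes "f \<in> l2" "g \<in> l2" "h \<in> l2"
  shows "cinner (\<lambda>x. a * g x + b * h x) f = cnj a * cinner g f + cnj b * cinner h f"
  by (subst (1 2 3) cinner_commute) (simp add: cinner_lincomb_right[OF assms])

lemma cinner_sum_right:
  assumes "\<And>i. i \<in> S \<Longrightarrow> h i \<in> l2" "f \<in> l2"
  shows "cinner f (\<lambda>x. \<Sum>i\<in>S. c i * h i x) = (\<Sum>i\<in>S. c i * cinner f (h i))"
  using assms(1)
proof (induction S rule: infinite_finite_induct)
  case (insert j S)
  have "cinner f (\<lambda>x. c j * h j x + 1 * (\<Sum>i\<in>S. c i * h i x))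
      = c j * cinner f (h j) + 1 * cinner f (\<lambda>x. \<Sum>i\<in>S. c i * h i x)"
    using insert.prems by (intro cinner_lincomb_right assms(2) l2_sum) auto
  with insert show ?case
    by simp
qed (simp_all add: cinner_def)

lemma cinner_finite_support:
  assumes "finite A" "\<And>z. z \<notin> A \<Longrightarrow> f z = 0"
  shows "cinner f g = (\<Sum>z\<in>A. cnj (f z) * g z)"
proof -
  have "(\<Sum>\<^sub>\<infinity>z. cnj (f z) * g z) = (\<Sum>\<^sub>\<infinity>z\<in>A. cnj (f z) * g z)"
    by (rule infsum_cong_neutral) (auto simp: assms)
  then show ?thesis
    unfolding cinner_def using assms by simp
qed

lemma cinner_Cd: "u \<in> Cd d \<Longrightarrow> cinner u v = (\<Sum>k<d. cnj (u k) * v k)"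
  by (rule cinner_finite_support) (auto simp: Cd_def)

lemma orthonormal_family_tensor_space_l2:
  "orthonormal_family (tensor_space d) ip n e \<Longrightarrow> orthonormal_family l2 ip n e"
  unfolding orthonormal_family_def tensor_space_def by blast

lemma cinner_orthonormal_sum:
  assumes "orthonormal_family l2 cinner d E" "a < d"
  shows "cinner (E a) (\<lambda>x. \<Sum>i<d. c i * E i x) = c a"
proof -
  have "cinner (E a) (\<lambda>x. \<Sum>i<d. c i * E i x) = (\<Sum>i<d. c i * cinner (E a) (E i))"
    using assms by (intro cinner_sum_right) (auto simp: orthonormal_family_def)
  also have "\<dots> = (\<Sum>i<d. if i = a then c a else 0)"
    using assms by (intro sum.cong) (auto simp: orthonormal_family_def)
  finally show ?thesis
    using assms(2) by simp
qed

lemma cinner_self_orthonormal_sum: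
  assumes "orthonormal_family l2 cinner d E"
  shows "cinner (\<lambda>x. \<Sum>i<d. c i * E i x) (\<lambda>x. \<Sum>i<d. c i * E i x) = (\<Sum>i<d. c i * cnj (c i))"
proof -
  have "E i \<in> l2" if "i < d" for i
    using assms that by (simp add: orthonormal_family_def)
  then have "cinner (\<lambda>x. \<Sum>i<d. c i * E i x) (\<lambda>x. \<Sum>i<d. c i * E i x)
      = (\<Sum>i<d. c i * cnj (cinner (E i) (\<lambda>x. \<Sum>i<d. c i * E i x)))"
    by (subst cinner_sum_right)
      (auto intro: l2_sum sum.cong simp: cinner_commute[of "\<lambda>x. \<Sum>i<d. c i * E i x"])
  also have "\<dots> = (\<Sum>i<d. c i * cnj (c i))"
    using assms by (simp add: cinner_orthonormal_sum)
  finally show ?thesis .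
qed

text \<open>The residual R = G - \<Sum>i. c i * E i is orthogonal to every E i, and
  <R, R> = <G, G> - \<Sum>i. |c i|^2.\<close>
lemma bessel_inequality:
  assumes G: "G \<in> l2" and E: "orthonormal_family l2 cinner d E"
  shows "(\<Sum>i<d. (cmod (cinner (E i) G))\<^sup>2) \<le> Re (cinner G G)"
proof -
  define c where "c i = cinner (E i) G" for i
  define S where "S = (\<lambda>x. \<Sum>i<d. c i * E i x)"
  define R where "R = (\<lambda>x. G x - S x)"
  have R_lincomb: "R = (\<lambda>x. 1 * G x + (-1) * S x)"
    by (simp add: R_def)
  have El: "E i \<in> l2" if "i < d" for i
    using E that by (simp add: orthonormal_family_def)
  have S: "S \<in> l2"
    unfolding S_def using El by (intro l2_sum) auto
  have R: "R \<in> l2"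
    unfolding R_lincomb using G S by (rule l2_lincomb)
  have "cinner (E i) R = 0" if "i < d" for i
    using cinner_lincomb_right[OF El[OF that] G S, of 1 "-1", folded R_lincomb]
      cinner_orthonormal_sum[OF E that, of c]
    by (simp add: S_def c_def)
  then have "cinner R S = 0"
    unfolding S_def using El R by (subst cinner_sum_right) (auto simp: cinner_commute[of R])
  moreover have "cinner G S = (\<Sum>i<d. c i * cnj (c i))"
    unfolding S_def using El G
    by (subst cinner_sum_right) (auto simp: c_def cinner_commute[of G])
  moreover have "cinner R R = cnj (cinner G G - cinner G S) - cinner R S"
    using cinner_lincomb_right[OF R G S, of 1 "-1", folded R_lincomb]
      cinner_lincomb_right[OF G G S, of 1 "-1", folded R_lincomb]
    by (simp add: cinner_commute[of R G])
  ultimately have "Re (cinner R R) = Re (cinner G G) - (\<Sum>i<d. (cmod (c i))\<^sup>2)"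
    by (simp add: Re_sum complex_mult_cnj cmod_power2)
  with cinner_self_nonneg[OF R] show ?thesis
    by (simp add: c_def)
qed

definition unit_vec :: "'a \<Rightarrow> 'a \<Rightarrow> complex" where
  "unit_vec p = (\<lambda>z. if z = p then 1 else 0)"

lemma l2_unit_vec: "unit_vec p \<in> l2"
  by (rule l2_finite_support[of "{p}"]) (auto simp: unit_vec_def)

lemma cinner_unit_vec_left: "cinner (unit_vec p) g = g p"
  by (subst cinner_finite_support[of "{p}"]) (auto simp: unit_vec_def)

lemma cinner_unit_vec: "cinner (unit_vec p) (unit_vec p') = (if p = p' then 1 else 0)"
  unfolding cinner_unit_vec_left by (simp add: unit_vec_def)

lemma orthonormal_family_unit_vec: "orthonormal_family l2 cinner d unit_vec"
  unfolding orthonormal_family_def by (intro conjI allI impI l2_unit_vec cinner_unit_vec)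

lemma tensor_unit_vec_left: "tensor (unit_vec k) f = (\<lambda>z. if fst z = k then f (snd z) else 0)"
  by (auto simp: tensor_def unit_vec_def)

lemma summable_on_fst_slice:
  fixes \<phi> :: "'h \<Rightarrow> 'b::{comm_monoid_add,t2_space}"
  shows "(\<lambda>z. if fst z = k then \<phi> (snd z) else 0) summable_on UNIV \<longleftrightarrow> \<phi> summable_on UNIV"
proof -
  have "(\<lambda>z. if fst z = k then \<phi> (snd z) else 0) summable_on UNIV
      \<longleftrightarrow> (\<lambda>z. if fst z = k then \<phi> (snd z) else 0) summable_on range (Pair k)"
    by (rule summable_on_cong_neutral) (auto simp: image_iff)
  also have "\<dots> \<longleftrightarrow> ((\<lambda>z. if fst z = k then \<phi> (snd z) else 0) \<circ> Pair k) summable_on UNIV"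
    by (rule summable_on_reindex) (auto simp: inj_on_def)
  finally show ?thesis
    by (simp add: o_def)
qed

lemma infsum_fst_slice:
  fixes \<phi> :: "'h \<Rightarrow> 'b::{comm_monoid_add,t2_space}"
  shows "(\<Sum>\<^sub>\<infinity>z. if fst z = k then \<phi> (snd z) else 0) = (\<Sum>\<^sub>\<infinity>x. \<phi> x)"
proof -
  have "(\<Sum>\<^sub>\<infinity>z. if fst z = k then \<phi> (snd z) else 0)
      = (\<Sum>\<^sub>\<infinity>z\<in>range (Pair k). if fst z = k then \<phi> (snd z) else 0)"
    by (rule infsum_cong_neutral) (auto simp: image_iff)
  also have "\<dots> = infsum ((\<lambda>z. if fst z = k then \<phi> (snd z) else 0) \<circ> Pair k) UNIV"
    by (rule infsum_reindex) (auto simp: inj_on_def)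
  finally show ?thesis
    by (simp add: o_def)
qed

lemma l2_tensor_unit_vec:
  assumes "f \<in> l2"
  shows "tensor (unit_vec k) f \<in> l2"
proof -
  have "(\<lambda>z. (cmod (tensor (unit_vec k) f z))\<^sup>2) = (\<lambda>z. if fst z = k then (cmod (f (snd z)))\<^sup>2 else 0)"
    by (auto simp: tensor_unit_vec_left)
  then show ?thesis
    using assms summable_on_fst_slice[of k "\<lambda>x. (cmod (f x))\<^sup>2"] by (simp add: l2_def)
qed

lemma cinner_tensor_unit_vec:
  "cinner (tensor (unit_vec j) f) (tensor (unit_vec k) g) = (if j = k then cinner f g else 0)"
proof -
  define \<phi> where "\<phi> = (\<lambda>x. if j = k then cnj (f x) * g x else 0)"
  have slice: "(\<lambda>z. cnj (tensor (unit_vec j) f z) * tensor (unit_vec k) g z)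
      = (\<lambda>z. if fst z = k then \<phi> (snd z) else 0)"
    unfolding tensor_unit_vec_left \<phi>_def by auto
  show ?thesis
    unfolding cinner_def slice infsum_fst_slice by (simp add: \<phi>_def cinner_def)
qed

lemma tensor_eq_sum_tensor_unit_vec:
  assumes "u \<in> Cd d"
  shows "tensor u f = (\<lambda>z. \<Sum>k<d. u k * tensor (unit_vec k) f z)"
proof
  fix z :: "nat \<times> 'a"
  obtain a x where z: "z = (a, x)"
    by fastforce
  have "(\<Sum>k<d. u k * tensor (unit_vec k) f z) = (\<Sum>k<d. if k = a then u a * f x else 0)"
    by (intro sum.cong) (auto simp: tensor_unit_vec_left z)
  then show "tensor u f z = (\<Sum>k<d. u k * tensor (unit_vec k) f z)"
    using assms by (simp add: tensor_def z Cd_def not_less)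
qed

lemma tensor_in_tensor_space:
  assumes "u \<in> Cd d" "f \<in> l2"
  shows "tensor u f \<in> tensor_space d"
  unfolding tensor_space_def
proof (intro CollectI conjI allI impI)
  show "tensor u f \<in> l2"
    unfolding tensor_eq_sum_tensor_unit_vec[OF assms(1)]
    by (intro l2_sum l2_tensor_unit_vec assms(2))
  show "tensor u f (k, x) = 0" if "d \<le> k" for k x
    using assms(1) that by (simp add: tensor_def Cd_def)
qed

lemma cinner_tensor:
  assumes u: "u \<in> Cd d" and v: "v \<in> Cd d" and f: "f \<in> l2" and g: "g \<in> l2"
  shows "cinner (tensor u f) (tensor v g) = cinner u v * cinner f g"
proof -
  have uf: "tensor u f \<in> l2"
    using tensor_in_tensor_space[OF u f] by (simp add: tensor_space_def)
  have "cinner (tensor (unit_vec k) g) (tensor u f) = u k * cinner g f" if "k < d" for k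
  proof -
    have "cinner (tensor (unit_vec k) g) (tensor u f)
        = (\<Sum>j<d. u j * cinner (tensor (unit_vec k) g) (tensor (unit_vec j) f))"
      unfolding tensor_eq_sum_tensor_unit_vec[OF u]
      by (intro cinner_sum_right l2_tensor_unit_vec f g)
    also have "\<dots> = u k * cinner g f"
      using that by (simp add: cinner_tensor_unit_vec if_distrib cong: if_cong)
    finally show ?thesis .
  qed
  then have "cinner (tensor u f) (tensor v g) = (\<Sum>k<d. v k * (cnj (u k) * cinner f g))"
    unfolding tensor_eq_sum_tensor_unit_vec[OF v]
    by (subst cinner_sum_right) (auto intro: l2_tensor_unit_vec g uf
        simp: cinner_commute[of "tensor u f"] cinner_commute[of g f])
  also have "\<dots> = (\<Sum>k<d. cnj (u k) * v k) * cinner f g"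
    unfolding sum_distrib_right by (simp add: mult_ac)
  finally show ?thesis
    by (simp add: cinner_Cd[OF u])
qed

lemma orthonormal_family_Fvec:
  assumes "orthonormal_family (Cd d) cinner d psis" "orthonormal_family l2 cinner d fs"
  shows "orthonormal_family (tensor_space d) cinner d (Fvec psis fs)"
  using assms unfolding orthonormal_family_def Fvec_def
  by (simp add: tensor_in_tensor_space cinner_tensor[of _ d])

lemma tensor_space_lincomb:
  "F \<in> tensor_space d \<Longrightarrow> G \<in> tensor_space d \<Longrightarrow> (\<lambda>z. a * F z + b * G z) \<in> tensor_space d"
  by (simp add: tensor_space_def l2_lincomb)

lemma tensor_space_sum:
  assumes "\<And>i. i \<in> S \<Longrightarrow> F i \<in> tensor_space d"
  shows "(\<lambda>z. \<Sum>i\<in>S. c i * F i z) \<in> tensor_space d"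
  using assms by (auto simp: tensor_space_def intro: l2_sum)

lemma orthonormal_family_unitary_image:
  assumes "unitary_on d U" "orthonormal_family (tensor_space d) cinner d E"
  shows "orthonormal_family (tensor_space d) cinner d (\<lambda>i. U (E i))"
  using assms unfolding unitary_on_def orthonormal_family_def by simp

definition reflection :: "('a \<Rightarrow> complex) \<Rightarrow> ('a \<Rightarrow> complex) \<Rightarrow> 'a \<Rightarrow> complex" where
  "reflection w F = (\<lambda>z. F z - (2 * cinner w F / cinner w w) * w z)"

lemma reflection_lincomb_form:
  "reflection w F = (\<lambda>z. 1 * F z + (- (2 * cinner w F / cinner w w)) * w z)"
  by (simp add: reflection_def)

lemma cinner_reflection_right:
  assumes "f \<in> l2" "w \<in> l2" "F \<in> l2"
  shows "cinner f (reflection w F) = cinner f F - 2 * cinner w F / cinner w w * cinner f w"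
  unfolding reflection_lincomb_form cinner_lincomb_right[OF assms(1,3,2)] by simp

lemma cinner_reflection_left:
  assumes "f \<in> l2" "w \<in> l2" "F \<in> l2"
  shows "cinner (reflection w F) f = cinner F f - 2 * cinner F w / cinner w w * cinner w f"
  unfolding reflection_lincomb_form cinner_lincomb_left[OF assms(1,3,2)]
  by (simp add: cinner_commute[of F w, symmetric] cinner_commute[of w w, symmetric])

lemma l2_reflection: "w \<in> l2 \<Longrightarrow> F \<in> l2 \<Longrightarrow> reflection w F \<in> l2"
  unfolding reflection_lincomb_form by (rule l2_lincomb)

lemma cinner_reflection:
  assumes w: "w \<in> l2" and F: "F \<in> l2" and G: "G \<in> l2" and ww: "cinner w w \<noteq> 0"
  shows "cinner (reflection w F) (reflection w G) = cinner F G"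
  using ww
  by (simp add: cinner_reflection_left[OF l2_reflection[OF w G] w F]
      cinner_reflection_right[OF F w G] cinner_reflection_right[OF w w G] field_simps)

lemma reflection_lincomb:
  assumes "w \<in> l2" "F \<in> l2" "G \<in> l2"
  shows "reflection w (\<lambda>z. a * F z + b * G z) = (\<lambda>z. a * reflection w F z + b * reflection w G z)"
  using cinner_lincomb_right[OF assms]
  by (simp add: reflection_def algebra_simps add_divide_distrib)

lemma reflection_reflection:
  assumes "w \<in> l2" "F \<in> l2" "cinner w w \<noteq> 0"
  shows "reflection w (reflection w F) = F"
  using cinner_reflection_right[OF assms(1,1,2)] assms(3)
  by (simp add: reflection_def[of w "reflection w F"]) (simp add: reflection_def)

lemma unitary_on_reflection:
  fixes w :: "nat \<times> 'h \<Rightarrow> complex"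
  assumes w: "w \<in> tensor_space d" and ww: "cinner w w \<noteq> 0"
  shows "unitary_on d (reflection w)"
proof -
  have l2: "F \<in> l2" if "F \<in> tensor_space d" for F :: "nat \<times> 'h \<Rightarrow> complex"
    using that by (simp add: tensor_space_def)
  have closed: "reflection w F \<in> tensor_space d" if "F \<in> tensor_space d" for F
    unfolding reflection_lincomb_form using that w by (rule tensor_space_lincomb)
  show ?thesis
    unfolding unitary_on_def
  proof (intro conjI ballI allI subsetI)
    fix F G :: "nat \<times> 'h \<Rightarrow> complex" and a b
    assume F: "F \<in> tensor_space d" and G: "G \<in> tensor_space d"
    show "reflection w (\<lambda>z. a * F z + b * G z) = (\<lambda>z. a * reflection w F z + b * reflection w G z)"
      using w F G by (intro reflection_lincomb l2)
    show "cinner (reflection w F) (reflection w G) = cinner F G"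
      using w F G ww by (intro cinner_reflection l2)
  next
    fix F :: "nat \<times> 'h \<Rightarrow> complex"
    assume F: "F \<in> tensor_space d"
    then show "reflection w F \<in> tensor_space d"
      by (rule closed)
    have "F = reflection w (reflection w F)"
      using w F ww by (intro reflection_reflection[symmetric] l2)
    then show "F \<in> reflection w ` tensor_space d"
      using closed[OF F] by blast
  qed
qed

lemma cinner_self_diff:
  assumes u: "u \<in> l2" and v: "v \<in> l2"
    and "cinner u u = cinner v v" "cinner v u = cinner u v"
  shows "cinner (\<lambda>z. v z - u z) (\<lambda>z. v z - u z) = 2 * (cinner v v - cinner u v)"
proof -
  have "(\<lambda>z. v z - u z) \<in> l2"
    using l2_lincomb[OF v u, of 1 "-1"] by simp
  then show ?thesis
    using cinner_lincomb_right[of "\<lambda>z. v z - u z" v u 1 "-1"]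
      cinner_lincomb_left[OF v v u, of 1 "-1"] cinner_lincomb_left[OF u v u, of 1 "-1"] u v assms(3,4)
    by simp
qed

lemma reflection_diff_eq:
  assumes u: "u \<in> l2" and v: "v \<in> l2"
    and "cinner u u = cinner v v" "cinner v u = cinner u v" "cinner u v \<noteq> cinner v v"
  shows "reflection (\<lambda>z. v z - u z) v = u"
proof -
  have "cinner (\<lambda>z. v z - u z) v = cinner v v - cinner u v"
    using cinner_lincomb_left[OF v v u, of 1 "-1"] by simp
  then have "2 * cinner (\<lambda>z. v z - u z) v / cinner (\<lambda>z. v z - u z) (\<lambda>z. v z - u z) = 1"
    using cinner_self_diff[OF assms(1-4)] assms(5) by simp
  then show ?thesis
    by (simp add: reflection_def)
qed

lemma unitary_on_reflection_diff:
  fixes u v :: "nat \<times> 'h \<Rightarrow> complex"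
  assumes u: "u \<in> tensor_space d" and v: "v \<in> tensor_space d"
    and "cinner u u = cinner v v" "cinner v u = cinner u v" "cinner u v \<noteq> cinner v v"
  shows "unitary_on d (reflection (\<lambda>z. v z - u z))"
proof (rule unitary_on_reflection)
  show "(\<lambda>z. v z - u z) \<in> tensor_space d"
    using tensor_space_lincomb[OF v u, of 1 "-1"] by simp
  show "cinner (\<lambda>z. v z - u z) (\<lambda>z. v z - u z) \<noteq> 0"
    using u v assms(3-5) by (subst cinner_self_diff) (auto simp: tensor_space_def)
qed

lemma sum_mult_minus_sum_abs_diff_le:
  fixes P c q :: "'a \<Rightarrow> real"
  assumes "finite A" and c: "\<forall>i\<in>A. 0 \<le> c i" "sum c A \<le> 1" and q: "\<forall>i\<in>A. q i \<le> M" "0 \<le> M"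
  shows "(\<Sum>i\<in>A. P i * c i) - (\<Sum>i\<in>A. \<bar>P i - q i\<bar>) \<le> M"
proof -
  have "P i * c i \<le> M * c i + \<bar>P i - q i\<bar>" if i: "i \<in> A" for i
  proof -
    have "c i \<le> 1"
      using member_le_sum[of i A c] assms i by auto
    have "P i * c i \<le> (q i + \<bar>P i - q i\<bar>) * c i"
      using c i by (intro mult_right_mono) auto
    also have "\<dots> \<le> M * c i + \<bar>P i - q i\<bar>"
      unfolding distrib_right using c q i \<open>c i \<le> 1\<close>
      by (intro add_mono mult_right_mono mult_left_le) auto
    finally show ?thesis .
  qed
  then have "(\<Sum>i\<in>A. P i * c i) \<le> (\<Sum>i\<in>A. M * c i + \<bar>P i - q i\<bar>)"
    by (rule sum_mono)
  also have "\<dots> = M * sum c A + (\<Sum>i\<in>A. \<bar>P i - q i\<bar>)"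
    by (simp add: sum.distrib sum_distrib_left)
  moreover have "M * sum c A \<le> M"
    using c q by (simp add: mult_left_le)
  ultimately show ?thesis
    by linarith
qed

lemma realization_orthonormal_family_Fvec:
  "realization d psis fs psi U \<Longrightarrow> orthonormal_family (tensor_space d) cinner d (Fvec psis fs)"
  unfolding realization_def by (blast intro: orthonormal_family_Fvec)

lemma p_abs_id:
  assumes R: "realization d psis fs psi U" and a: "a < d"
  shows "p_abs d psis fs psi id a = (cmod (alpha psis psi a))\<^sup>2"
proof -
  have "orthonormal_family (tensor_space d) cinner d (Fvec psis fs)"
    using R by (rule realization_orthonormal_family_Fvec)
  then have "p_abs d psis fs psi id a = (\<Sum>i<d. if i = a then (cmod (alpha psis psi a))\<^sup>2 else 0)"
    unfolding p_abs_def using a by (intro sum.cong) (auto simp: orthonormal_family_def)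
  then show ?thesis
    using a by simp
qed

lemma sum_transition_probabilities_le_1:
  assumes R: "realization d psis fs psi U" and a: "a < d"
  shows "(\<Sum>i<d. (cmod (cinner (Fvec psis fs a) (U (Fvec psis fs i))))\<^sup>2) \<le> 1"
proof -
  have F: "orthonormal_family (tensor_space d) cinner d (Fvec psis fs)"
    using R by (rule realization_orthonormal_family_Fvec)
  moreover have "unitary_on d U"
    using R by (simp add: realization_def)
  ultimately have "orthonormal_family (tensor_space d) cinner d (\<lambda>i. U (Fvec psis fs i))"
    by (rule orthonormal_family_unitary_image[rotated])
  then have "orthonormal_family l2 cinner d (\<lambda>i. U (Fvec psis fs i))"
    by (rule orthonormal_family_tensor_space_l2)
  moreover have "Fvec psis fs a \<in> l2" "cinner (Fvec psis fs a) (Fvec psis fs a) = 1"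
    using F a by (auto simp: orthonormal_family_def tensor_space_def)
  moreover have "cmod (cinner (Fvec psis fs a) (U (Fvec psis fs i)))
      = cmod (cinner (U (Fvec psis fs i)) (Fvec psis fs a))" for i
    by (subst cinner_commute) simp
  ultimately show ?thesis
    using bessel_inequality[of "Fvec psis fs a" d "\<lambda>i. U (Fvec psis fs i)"] by simp
qed

lemma T_val_p_abs_le_Max:
  fixes q :: "nat \<Rightarrow> real"
  assumes R: "realization d psis fs psi U" and "0 < d" "\<forall>i<d. 0 \<le> q i"
  shows "T_val d q (p_abs d psis fs psi) id U \<le> Max (q ` {..<d})"
proof -
  have q_le_Max: "\<forall>i\<in>{..<d}. q i \<le> Max (q ` {..<d})"
    by simp
  then have Max_nonneg: "0 \<le> Max (q ` {..<d})"
    using assms(2,3) by (meson lessThan_iff order_trans)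
  have "p_abs d psis fs psi U 0
      = (\<Sum>i<d. (cmod (alpha psis psi i))\<^sup>2 * (cmod (cinner (Fvec psis fs 0) (U (Fvec psis fs i))))\<^sup>2)"
    unfolding p_abs_def ..
  moreover have "(\<Sum>i<d. \<bar>p_abs d psis fs psi id i - q i\<bar>) = (\<Sum>i<d. \<bar>(cmod (alpha psis psi i))\<^sup>2 - q i\<bar>)"
    by (rule sum.cong) (simp_all add: p_abs_id[OF R])
  ultimately have "T_val d q (p_abs d psis fs psi) id U
      = (\<Sum>i<d. (cmod (alpha psis psi i))\<^sup>2 * (cmod (cinner (Fvec psis fs 0) (U (Fvec psis fs i))))\<^sup>2)
        - (\<Sum>i<d. \<bar>(cmod (alpha psis psi i))\<^sup>2 - q i\<bar>)"
    by (simp add: T_val_def)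
  also have "\<dots> \<le> Max (q ` {..<d})"
    by (rule sum_mult_minus_sum_abs_diff_le)
      (use sum_transition_probabilities_le_1[OF R \<open>0 < d\<close>] q_le_Max Max_nonneg in auto)
  finally show ?thesis .
qed

lemma orthonormal_family_Cd_unit_vec: "orthonormal_family (Cd d) cinner d unit_vec"
  using orthonormal_family_unit_vec[of d] by (simp add: orthonormal_family_def Cd_def unit_vec_def)

lemma ex_unitary_on_superposition_to_first:
  fixes F :: "nat \<Rightarrow> nat \<times> 'h \<Rightarrow> complex"
  assumes F: "orthonormal_family (tensor_space d) cinner d F" and "0 < d"
    and c: "(\<Sum>i<d. c i * cnj (c i)) = 1" "cnj (c 0) = c 0" "c 0 \<noteq> 1"
  shows "\<exists>U. unitary_on d U \<and> U (\<lambda>z. \<Sum>i<d. c i * F i z) = F 0"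
proof -
  define v where "v = (\<lambda>z. \<Sum>i<d. c i * F i z)"
  have F_l2: "orthonormal_family l2 cinner d F"
    using F by (rule orthonormal_family_tensor_space_l2)
  have F0: "F 0 \<in> tensor_space d" "cinner (F 0) (F 0) = 1"
    using F \<open>0 < d\<close> by (auto simp: orthonormal_family_def)
  have v: "v \<in> tensor_space d"
    unfolding v_def using F by (intro tensor_space_sum) (auto simp: orthonormal_family_def)
  have F0_v: "cinner (F 0) v = c 0"
    unfolding v_def using F_l2 \<open>0 < d\<close> by (rule cinner_orthonormal_sum)
  have v_v: "cinner v v = 1"
    unfolding v_def using c(1) by (simp add: cinner_self_orthonormal_sum[OF F_l2])
  have "cinner v (F 0) = cinner (F 0) v"
    by (subst cinner_commute) (simp add: F0_v c(2))
  moreover have "cinner (F 0) v \<noteq> cinner v v"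
    using F0_v v_v c(3) by simp
  ultimately have "unitary_on d (reflection (\<lambda>z. v z - F 0 z))"
    "reflection (\<lambda>z. v z - F 0 z) v = F 0"
    using F0 v v_v by (simp_all add: unitary_on_reflection_diff reflection_diff_eq tensor_space_def)
  then show ?thesis
    unfolding v_def by blast
qed

lemma realization_with_T_val_p_nonabs_eq_1:
  fixes q :: "nat \<Rightarrow> real"
  assumes "0 < d" and q_nonneg: "\<forall>i<d. 0 \<le> q i" and "q 0 < 1" and q_sum: "(\<Sum>i<d. q i) = 1"
  shows "\<exists>(psis :: nat \<Rightarrow> nat \<Rightarrow> complex) (fs :: nat \<Rightarrow> nat \<Rightarrow> complex) psi U.
           realization d psis fs psi U \<and> T_val d q (p_nonabs d psis fs psi) id U = 1"
proof -
  define s where "s i = complex_of_real (sqrt (q i))" for i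
  define psi where "psi k = (if k < d then s k else 0)" for k
  define F where "F = Fvec unit_vec (unit_vec :: nat \<Rightarrow> nat \<Rightarrow> complex)"
  have s_sq: "s i * cnj (s i) = q i" if "i < d" for i
    using q_nonneg that by (simp add: s_def flip: of_real_mult)
  have F: "orthonormal_family (tensor_space d) cinner d F"
    unfolding F_def using orthonormal_family_Cd_unit_vec orthonormal_family_unit_vec
    by (rule orthonormal_family_Fvec)
  have "(\<Sum>i<d. s i * cnj (s i)) = 1"
    using q_sum s_sq by (simp flip: of_real_sum)
  moreover have "s 0 \<noteq> 1"
    using \<open>q 0 < 1\<close> by (simp add: s_def)
  ultimately obtain U where U: "unitary_on d U" "U (\<lambda>z. \<Sum>i<d. s i * F i z) = F 0"
    using ex_unitary_on_superposition_to_first[OF F \<open>0 < d\<close>, of s] by (auto simp: s_def)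
  have superposition: "(\<lambda>z. \<Sum>i<d. alpha unit_vec psi i * F i z) = (\<lambda>z. \<Sum>i<d. s i * F i z)"
    unfolding alpha_def by (auto simp: cinner_unit_vec_left psi_def intro: sum.cong)
  have psi: "psi \<in> Cd d"
    by (simp add: Cd_def psi_def)
  have "cinner psi psi = (\<Sum>k<d. of_real (q k))"
    unfolding cinner_Cd[OF psi] by (rule sum.cong) (simp_all add: psi_def s_sq mult.commute)
  then have R: "realization d unit_vec unit_vec psi U"
    unfolding realization_def using orthonormal_family_Cd_unit_vec orthonormal_family_unit_vec
      psi U(1) q_sum by (simp flip: of_real_sum)
  have p_U: "p_nonabs d unit_vec unit_vec psi U 0 = 1"
    unfolding p_nonabs_def F_def[symmetric] superposition U(2)
    using F \<open>0 < d\<close> by (simp add: orthonormal_family_def)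
  have p_id: "p_nonabs d unit_vec unit_vec psi id a = q a" if "a < d" for a
    unfolding p_nonabs_def F_def[symmetric] superposition
    using cinner_orthonormal_sum[OF orthonormal_family_tensor_space_l2[OF F] that] q_nonneg that
    by (simp add: s_def)
  have "T_val d q (p_nonabs d unit_vec unit_vec psi) id U = 1"
    unfolding T_val_def using p_U p_id by simp
  with R show ?thesis
    by blast
qed

theorem mainTheorem3:
  fixes d :: nat and q :: "nat \<Rightarrow> real"
  assumes "d \<ge> 2"
    and "\<forall>i<d. 0 \<le> q i \<and> q i < 1"
    and "(\<Sum>i<d. q i) = 1"
  shows "(\<forall>(psis :: nat \<Rightarrow> nat \<Rightarrow> complex) (fs :: nat \<Rightarrow> 'h \<Rightarrow> complex) psi U.
            realization d psis fs psi U \<longrightarrow>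
            T_val d q (p_abs d psis fs psi) id U \<le> Max (q ` {..<d}))
       \<and> (\<exists>(psis :: nat \<Rightarrow> nat \<Rightarrow> complex) (fs :: nat \<Rightarrow> nat \<Rightarrow> complex) psi U.
            realization d psis fs psi U \<and>
            T_val d q (p_nonabs d psis fs psi) id U = 1)"
proof -
  have d: "0 < d"
    using assms(1) by simp
  have q_nonneg: "\<forall>i<d. 0 \<le> q i" and "q 0 < 1"
    using assms(2) d by simp_all
  show ?thesis
    using T_val_p_abs_le_Max[OF _ d q_nonneg]
      realization_with_T_val_p_nonabs_eq_1[OF d q_nonneg \<open>q 0 < 1\<close> assms(3)]
    by blast
qed

end
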